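(* Let $A=\{(0,0,0),(0,1,0),(1,0,0),(1,1,0)\}\subset\mathbb{R}^3$ and let $\lambda\subset\mathbb{R}^3$ be the line $x=y=\tfrac12$. Then the set $\Lambda$ of points $P\in\lambda\cap\mathbb{Q}^3$ such that the Euclidean distance $|PQ|$ is rational for every $Q\in A$ is dense in $\lambda$ (with the Euclidean topology).
   Context: No further context is needed. *)

theory Defs
  imports "HOL-Analysis.Analysis"
begin

end

theory Submission
  imports Defs
begin

text \<open>The point (1/2, 1/2, z) is at distance sqrt(1/2 + z^2) from each corner of the unit
  square A. For rational t > 0 the numbers z = t/2 - 1/(4t) and w = t/2 + 1/(4t) are rational
  with w^2 - z^2 = 1/2, so (1/2, 1/2, z) lies in \<Lambda>; since t \<mapsto> z maps (0, \<infinity>) continuously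
  onto \<real>, these heights z are dense.\<close>

lemma dist_vector_3:
  "dist (vector [x1, x2, x3] :: real^3) (vector [y1, y2, y3]) =
     sqrt ((x1 - y1)\<^sup>2 + (x2 - y2)\<^sup>2 + (x3 - y3)\<^sup>2)"
  by (simp add: dist_norm norm_vec_def L2_set_def sum_3 vector_3)

lemma vector_3_components: "(P :: 'a::zero^3) = vector [P$1, P$2, P$3]"
  by (simp add: vec_eq_iff forall_3 vector_3)

lemma vertical_line_eq_range_vector_3:
  "{P :: 'a::zero^3. P$1 = a \<and> P$2 = b} = range (\<lambda>z. vector [a, b, z])"
proof
  show "{P :: 'a^3. P$1 = a \<and> P$2 = b} \<subseteq> range (\<lambda>z. vector [a, b, z])"
  proof
    fix P :: "'a^3" assume "P \<in> {P. P$1 = a \<and> P$2 = b}"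
    then have "P = vector [a, b, P$3]"
      using vector_3_components[of P] by simp
    then show "P \<in> range (\<lambda>z. vector [a, b, z])" by blast
  qed
qed (auto simp: vector_3)

lemma continuous_on_image_subset_closure_image_dense:
  fixes f :: "'a::topological_space \<Rightarrow> 'b::topological_space"
  assumes contf: "continuous_on U f" and "open U" and dense: "U \<subseteq> closure T"
  shows "f ` U \<subseteq> closure (f ` (U \<inter> T))"
proof
  fix y assume "y \<in> f ` U"
  then obtain x where x: "x \<in> U" "y = f x" by blast
  show "y \<in> closure (f ` (U \<inter> T))"
    unfolding closure_iff_nhds_not_empty
  proof (intro allI impI)
    fix V W assume "W \<subseteq> V" "open W" "y \<in> W"
    have "open (U \<inter> f -` W)"
      using continuous_open_preimage[OF contf \<open>open U\<close> \<open>open W\<close>] .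
    moreover have "x \<in> U \<inter> f -` W" and "x \<in> closure T"
      using x \<open>y \<in> W\<close> dense by auto
    ultimately have "(U \<inter> f -` W) \<inter> T \<noteq> {}"
      using open_Int_closure_eq_empty by blast
    then show "f ` (U \<inter> T) \<inter> V \<noteq> {}"
      using \<open>W \<subseteq> V\<close> by blast
  qed
qed

lemma half_minus_quarter_inverse_surj:
  "(\<lambda>t::real. t/2 - 1/(4*t)) ` {0<..} = UNIV"
proof -
  have "z \<in> (\<lambda>t. t/2 - 1/(4*t)) ` {0<..}" for z :: real
  proof
    define t where "t = z + sqrt (z\<^sup>2 + 1/2)"
    have "\<bar>z\<bar> = sqrt (z\<^sup>2)" by simp
    also have "\<dots> < sqrt (z\<^sup>2 + 1/2)" by (rule real_sqrt_less_mono) simp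
    finally show "t \<in> {0<..}" unfolding t_def by auto
    then have "t\<^sup>2/2 - 1/4 = z * t"
      unfolding t_def by (simp add: power2_eq_square algebra_simps)
    then show "z = t/2 - 1/(4*t)"
      using \<open>t \<in> {0<..}\<close> by (simp add: field_simps power2_eq_square)
  qed
  then show ?thesis by blast
qed

lemma closure_half_minus_quarter_inverse_Rats:
  "closure ((\<lambda>t::real. t/2 - 1/(4*t)) ` ({0<..} \<inter> \<rat>)) = UNIV"
proof -
  have "continuous_on {0<..} (\<lambda>t::real. t/2 - 1/(4*t))"
    by (auto intro!: continuous_intros)
  then have "(\<lambda>t::real. t/2 - 1/(4*t)) ` {0<..} \<subseteq> closure ((\<lambda>t. t/2 - 1/(4*t)) ` ({0<..} \<inter> \<rat>))"
    by (rule continuous_on_image_subset_closure_image_dense) (auto simp: Rats_closure_real)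
  then show ?thesis
    by (auto simp: half_minus_quarter_inverse_surj)
qed

lemma half_square_plus_square_eq:
  fixes t :: real
  assumes "t \<noteq> 0"
  shows "1/2 + (t/2 - 1/(4*t))\<^sup>2 = (t/2 + 1/(4*t))\<^sup>2"
  using assms by (simp add: power2_eq_square field_simps)

theorem proposition3p1:
  fixes A :: "(real^3) set" and lam Lam :: "(real^3) set"
  assumes "A = {vector [0,0,0], vector [0,1,0], vector [1,0,0], vector [1,1,0]}"
    and "lam = {P. P $ 1 = 1/2 \<and> P $ 2 = 1/2}"
    and "Lam = {P \<in> lam. (\<forall>i. P $ i \<in> \<rat>) \<and> (\<forall>Q\<in>A. dist P Q \<in> \<rat>)}"
  shows "lam \<subseteq> closure Lam"
proof -
  define g :: "real \<Rightarrow> real^3" where "g z = vector [1/2, 1/2, z]" for z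
  define h :: "real \<Rightarrow> real" where "h t = t/2 - 1/(4*t)" for t
  have lam_eq: "lam = range g"
    unfolding assms(2) g_def by (rule vertical_line_eq_range_vector_3)
  have "g (h t) \<in> Lam" if "t \<in> {0<..} \<inter> \<rat>" for t
  proof -
    have "sqrt (1/2 + (h t)\<^sup>2) = t/2 + 1/(4*t)"
      using that by (simp add: h_def half_square_plus_square_eq)
    moreover have "t/2 + 1/(4*t) \<in> \<rat>" and "h t \<in> \<rat>"
      using that by (auto simp: h_def)
    ultimately show ?thesis
      using assms by (auto simp: g_def vector_3 forall_3 dist_vector_3 power2_eq_square)
  qed
  then have "g ` h ` ({0<..} \<inter> \<rat>) \<subseteq> Lam" by blast
  moreover have "1-lipschitz_on UNIV g"
    by (rule lipschitz_onI) (auto simp: g_def dist_vector_3 dist_real_def)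
  then have "continuous_on UNIV g"
    by (rule lipschitz_on_continuous_on)
  ultimately have "g ` closure (h ` ({0<..} \<inter> \<rat>)) \<subseteq> closure Lam"
    by (meson closure_mono continuous_image_closure_subset order_trans subset_UNIV)
  then show ?thesis
    unfolding lam_eq h_def closure_half_minus_quarter_inverse_Rats .
qed

end
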